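(* Let $D$ be any distribution of $(X,A,Y)$ on $\mathcal{X}\times\{0,1\}\times\{0,1\}$ ($\mathcal{X}$ discrete), and let $\tilde D_t$ be obtained by applying the one-step bias process $t$ times, step $i$ with parameters $(\beta_{p,i},\beta_{n,i},\nu_i)$; let $(X,A,\tilde Y_t)$ denote a random point from $\tilde D_t$ and $c_i=\beta_{n,i}/\beta_{p,i}$. Let $\eta(x,a)=\Pr[Y=1\mid X=x,A=a]$ and $\tilde\eta_t(x,a)=\Pr[\tilde Y_t=1\mid X=x,A=a]$. Then $$\tilde\eta_t(x,0)=\frac{\eta(x,0)}{\displaystyle\sum_{i=1}^t\Big(\frac{1-c_i}{1-\nu_i}\prod_{j=i+1}^t\frac{c_j}{1-\nu_j}\Big)\eta(x,0)+\prod_{i=1}^t\frac{c_i}{1-\nu_i}},$$ where $\prod_{j=t+1}^t\frac{c_j}{1-\nu_j}=1$.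
   Context: One-step bias process with parameters $(\beta_p',\beta_n',\nu')$, $\beta_p',\beta_n',\nu'\in(0,1)$, applied to a distribution of $(X,A,Y)$: points with $A=1$ are kept unchanged; points with $A=0,Y=1$ survive independently with probability $\beta_p'$, points with $A=0,Y=0$ survive independently with probability $\beta_n'$; each surviving point with $A=0,Y=1$ keeps label $1$ with probability $1-\nu'$ and is flipped to $0$ with probability $\nu'$; the output is the distribution of surviving points. $\tilde D_t$ results from applying step $i$ to the output of step $i-1$, starting from $D$. *)

theory Defs
  imports "HOL-Probability.Probability"
begin

(* Points are (x, a, y) with a, y :: bool encoding {0,1} (True = 1). *)

definition bias_step :: "real \<Rightarrow> real \<Rightarrow> real \<Rightarrow> ('x \<times> bool \<times> bool) pmf \<Rightarrow> ('x \<times> bool \<times> bool) pmf" where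
  "bias_step bp bn nu D =
     map_pmf the
       (cond_pmf
         (bind_pmf D (\<lambda>(x, a, y).
            if a then return_pmf (Some (x, a, y))
            else if y then
              bind_pmf (bernoulli_pmf bp) (\<lambda>s.
                if s then map_pmf (\<lambda>flip. Some (x, a, \<not> flip)) (bernoulli_pmf nu)
                else return_pmf None)
            else
              map_pmf (\<lambda>s. if s then Some (x, a, y) else None) (bernoulli_pmf bn)))
         {z. z \<noteq> None})"

primrec biased :: "(nat \<Rightarrow> real) \<Rightarrow> (nat \<Rightarrow> real) \<Rightarrow> (nat \<Rightarrow> real) \<Rightarrow> ('x \<times> bool \<times> bool) pmf \<Rightarrow> nat \<Rightarrow> ('x \<times> bool \<times> bool) pmf" where
  "biased bp bn nu D 0 = D"
| "biased bp bn nu D (Suc i) = bias_step (bp (Suc i)) (bn (Suc i)) (nu (Suc i)) (biased bp bn nu D i)"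

(* eta D x a = Pr[Y = 1 | X = x, A = a] under D (0 if the conditioning event is null) *)
definition eta :: "('x \<times> bool \<times> bool) pmf \<Rightarrow> 'x \<Rightarrow> bool \<Rightarrow> real" where
  "eta D x a = measure_pmf.prob D {(x', a', y). x' = x \<and> a' = a \<and> y}
              / measure_pmf.prob D {(x', a', y). x' = x \<and> a' = a}"

end

theory Submission
  imports Defs
begin

text \<open>One step of the bias process acts on \<open>\<eta>(x,0)\<close> as the linear fractional map
  \<open>e \<mapsto> e / (a e + b)\<close> with \<open>a = (1 - c)/(1 - \<nu>)\<close> and \<open>b = c/(1 - \<nu>)\<close>: conditioning on
  survival rescales the masses of \<open>(x,0,1)\<close> and \<open>(x,0,0)\<close> by the same factor, which cancels
  in \<open>\<eta>\<close>. Such maps compose like affine maps of \<open>1/e\<close>, so after \<open>t\<close> steps the coefficients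
  are \<open>\<Sum>\<^sub>i a\<^sub>i \<Prod>\<^sub>j\<^sub>>\<^sub>i b\<^sub>j\<close> and \<open>\<Prod>\<^sub>i b\<^sub>i\<close>.\<close>

lemma sum_prod_tail_Suc:
  fixes a b :: "nat \<Rightarrow> 'a::comm_semiring_1"
  shows "(\<Sum>i=1..Suc t. a i * (\<Prod>j=i+1..Suc t. b j))
       = a (Suc t) + b (Suc t) * (\<Sum>i=1..t. a i * (\<Prod>j=i+1..t. b j))"
proof -
  have "(\<Prod>j=i+1..Suc t. b j) = b (Suc t) * (\<Prod>j=i+1..t. b j)" if "i \<le> t" for i
    using that by (simp add: prod.nat_ivl_Suc' mult.commute)
  then have "(\<Sum>i=1..t. a i * (\<Prod>j=i+1..Suc t. b j)) = b (Suc t) * (\<Sum>i=1..t. a i * (\<Prod>j=i+1..t. b j))"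
    by (simp add: sum_distrib_left algebra_simps)
  then show ?thesis
    by (simp add: sum.nat_ivl_Suc' add.commute)
qed

lemma linear_fractional_compose:
  fixes e S P a b :: real
  assumes "0 < S * e + P" "0 < a * (e / (S * e + P)) + b"
  shows "e / (S * e + P) / (a * (e / (S * e + P)) + b) = e / ((a + b * S) * e + b * P)"
    and "0 < (a + b * S) * e + b * P"
proof -
  have factor: "(a + b * S) * e + b * P = (S * e + P) * (a * (e / (S * e + P)) + b)"
    using assms(1) by (simp add: field_simps)
  then show "0 < (a + b * S) * e + b * P"
    using assms by simp
  show "e / (S * e + P) / (a * (e / (S * e + P)) + b) = e / ((a + b * S) * e + b * P)"
    unfolding factor by simp
qed

lemma iterated_linear_fractional:
  fixes f a b :: "nat \<Rightarrow> real"
  assumes "\<And>i. i < t \<Longrightarrow> f (Suc i) = f i / (a (Suc i) * f i + b (Suc i))"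
    and "\<And>i. i < t \<Longrightarrow> 0 < a (Suc i) * f i + b (Suc i)"
  shows "f t = f 0 / ((\<Sum>i=1..t. a i * (\<Prod>j=i+1..t. b j)) * f 0 + (\<Prod>i=1..t. b i))
     \<and> 0 < (\<Sum>i=1..t. a i * (\<Prod>j=i+1..t. b j)) * f 0 + (\<Prod>i=1..t. b i)"
  using assms
proof (induction t)
  case 0
  then show ?case by simp
next
  case (Suc t)
  define S where "S = (\<Sum>i=1..t. a i * (\<Prod>j=i+1..t. b j))"
  define P where "P = (\<Prod>i=1..t. b i)"
  have IH: "f t = f 0 / (S * f 0 + P)" "0 < S * f 0 + P"
    using Suc by (simp_all add: S_def P_def)
  have "0 < a (Suc t) * (f 0 / (S * f 0 + P)) + b (Suc t)"
    using Suc.prems(2)[of t] IH(1) by simp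
  note compose = linear_fractional_compose[OF IH(2) this]
  have f_Suc: "f (Suc t) = f 0 / (S * f 0 + P) / (a (Suc t) * (f 0 / (S * f 0 + P)) + b (Suc t))"
    using Suc.prems(1)[of t] IH(1) by simp
  have sum_Suc: "(\<Sum>i=1..Suc t. a i * (\<Prod>j=i+1..Suc t. b j)) = a (Suc t) + b (Suc t) * S"
    unfolding S_def by (rule sum_prod_tail_Suc)
  have prod_Suc: "(\<Prod>i=1..Suc t. b i) = b (Suc t) * P"
    unfolding P_def by (simp add: prod.nat_ivl_Suc')
  show ?case
    unfolding f_Suc sum_Suc prod_Suc compose(1) using compose(2) by (intro conjI refl)
qed

lemma eta_eq_pmf: "eta D x a = pmf D (x, a, True) / (pmf D (x, a, True) + pmf D (x, a, False))"
proof -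
  have "{(x', a', y). x' = x \<and> a' = a \<and> y} = {(x, a, True)}"
    and "{(x', a', y). x' = x \<and> a' = a} = {(x, a, True), (x, a, False)}"
    by auto
  then show ?thesis
    by (simp add: eta_def measure_pmf_single measure_measure_pmf_finite)
qed

lemma eta_nonneg: "0 \<le> eta D x a"
  by (simp add: eta_eq_pmf)

lemma eta_le_1: "eta D x a \<le> 1"
  unfolding eta_eq_pmf by (smt (verit) divide_le_eq_1 pmf_nonneg)

lemma pmf_map_the_cond_not_None:
  assumes "set_pmf N \<inter> {z. z \<noteq> None} \<noteq> {}"
  shows "pmf (map_pmf the (cond_pmf N {z. z \<noteq> None})) w = pmf N (Some w) / measure N {z. z \<noteq> None}"
proof -
  let ?C = "cond_pmf N {z. z \<noteq> None}"
  have "pmf (map_pmf the ?C) w = measure ?C (the -` {w} \<inter> set_pmf ?C)"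
    by (simp add: pmf_map measure_Int_set_pmf)
  also have "the -` {w} \<inter> set_pmf ?C = {Some w} \<inter> set_pmf ?C"
    using assms by auto
  also have "measure ?C \<dots> = pmf ?C (Some w)"
    by (simp add: measure_Int_set_pmf measure_pmf_single)
  also have "\<dots> = pmf N (Some w) / measure N {z. z \<noteq> None}"
    using assms by (simp add: pmf_cond)
  finally show ?thesis .
qed

lemma eta_map_the_cond_not_None:
  assumes "set_pmf N \<inter> {z. z \<noteq> None} \<noteq> {}"
  shows "eta (map_pmf the (cond_pmf N {z. z \<noteq> None})) x a
       = pmf N (Some (x, a, True)) / (pmf N (Some (x, a, True)) + pmf N (Some (x, a, False)))"
proof -
  obtain z where "z \<in> set_pmf N" "z \<in> {z. z \<noteq> None}"
    using assms by blast
  then have "0 < measure N {z. z \<noteq> None}"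
    by (rule measure_pmf_posI)
  then have "p / r / (p / r + q / r) = p / (p + q)" if "r = measure N {z. z \<noteq> None}" for p q r :: real
    using that by (simp add: add_divide_distrib[symmetric])
  then show ?thesis
    unfolding eta_eq_pmf pmf_map_the_cond_not_None[OF assms] by blast
qed

definition bias_kernel :: "real \<Rightarrow> real \<Rightarrow> real \<Rightarrow> 'x \<times> bool \<times> bool \<Rightarrow> ('x \<times> bool \<times> bool) option pmf" where
  "bias_kernel bp bn nu = (\<lambda>(x, a, y).
     if a then return_pmf (Some (x, a, y))
     else if y then
       bind_pmf (bernoulli_pmf bp) (\<lambda>s.
         if s then map_pmf (\<lambda>flip. Some (x, a, \<not> flip)) (bernoulli_pmf nu)
         else return_pmf None)
     else
       map_pmf (\<lambda>s. if s then Some (x, a, y) else None) (bernoulli_pmf bn))"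

lemma bias_step_eq_cond_kernel:
  "bias_step bp bn nu D = map_pmf the (cond_pmf (bind_pmf D (bias_kernel bp bn nu)) {z. z \<noteq> None})"
  unfolding bias_step_def bias_kernel_def by simp

lemma bias_kernel_survives:
  assumes "0 < bp" "bp \<le> 1" "0 < bn" "bn \<le> 1"
  shows "set_pmf (bind_pmf D (bias_kernel bp bn nu)) \<inter> {z. z \<noteq> None} \<noteq> {}"
proof -
  obtain x a y where z: "(x, a, y) \<in> set_pmf D"
    using set_pmf_not_empty[of D] by (metis ex_in_conv prod_cases3)
  obtain flip where flip: "flip \<in> set_pmf (bernoulli_pmf nu)"
    using set_pmf_not_empty[of "bernoulli_pmf nu"] by blast
  have bp: "True \<in> set_pmf (bernoulli_pmf bp)" and bn: "True \<in> set_pmf (bernoulli_pmf bn)"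
    using assms by (simp_all add: set_pmf_iff)
  have "\<exists>w. Some w \<in> set_pmf (bias_kernel bp bn nu (x, a, y))"
  proof (cases a)
    case True
    then show ?thesis by (simp add: bias_kernel_def)
  next
    case False
    show ?thesis
    proof (cases y)
      case True
      show ?thesis
        using \<open>\<not> a\<close> True bp flip by (auto simp: bias_kernel_def intro!: bexI[of _ True])
    next
      case False
      show ?thesis
        using \<open>\<not> a\<close> False bn by (auto simp: bias_kernel_def intro!: image_eqI[of _ _ True])
    qed
  qed
  then show ?thesis
    using z by auto
qed

lemma pmf_bind_bias_kernel_pos:
  assumes "0 \<le> bp" "bp \<le> 1" "0 \<le> bn" "bn \<le> 1" "0 \<le> nu" "nu \<le> 1"
  shows "pmf (bind_pmf D (bias_kernel bp bn nu)) (Some (x, False, True)) = bp * (1 - nu) * pmf D (x, False, True)"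
proof -
  have "pmf (bias_kernel bp bn nu z) (Some (x, False, True)) = bp * (1 - nu) * indicator {(x, False, True)} z" for z
    using assms by (cases z) (auto simp: bias_kernel_def map_pmf_def pmf_bind indicator_def)
  then show ?thesis
    by (simp add: pmf_bind measure_pmf_single)
qed

lemma pmf_bind_bias_kernel_neg:
  assumes "0 \<le> bp" "bp \<le> 1" "0 \<le> bn" "bn \<le> 1" "0 \<le> nu" "nu \<le> 1"
  shows "pmf (bind_pmf D (bias_kernel bp bn nu)) (Some (x, False, False))
       = bp * nu * pmf D (x, False, True) + bn * pmf D (x, False, False)"
proof -
  have "pmf (bias_kernel bp bn nu z) (Some (x, False, False))
      = bp * nu * indicator {(x, False, True)} z + bn * indicator {(x, False, False)} z" for z
    using assms by (cases z) (auto simp: bias_kernel_def map_pmf_def pmf_bind indicator_def)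
  then show ?thesis
    by (simp add: pmf_bind measure_pmf_single measure_pmf.integrable_const_bound[where B = 1])
qed

lemma reweighted_ratio_eq_linear_fractional:
  fixes p q bp bn nu :: real
  assumes "0 \<le> p" "0 \<le> q" "0 < bp" "0 < bn" "nu < 1"
  defines "c \<equiv> bn / bp"
  shows "bp * (1 - nu) * p / (bp * p + bn * q)
       = p / (p + q) / ((1 - c) / (1 - nu) * (p / (p + q)) + c / (1 - nu))"
proof (cases "p + q = 0")
  case True
  with assms(1,2) show ?thesis
    by (simp add: add_nonneg_eq_0_iff)
next
  case False
  with assms(1,2) have "0 < p + q"
    by simp
  then have "0 < p \<or> 0 < q"
    by linarith
  with assms have "0 < bp * p + bn * q"
    by (auto intro: add_pos_nonneg add_nonneg_pos)
  have denom: "(1 - c) / (1 - nu) * (p / (p + q)) + c / (1 - nu) = (bp * p + bn * q) / (bp * (1 - nu) * (p + q))"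
    using assms(3,5) \<open>0 < p + q\<close> by (simp add: c_def divide_simps) (simp add: algebra_simps)
  show ?thesis
    unfolding denom using assms(3,5) \<open>0 < p + q\<close> \<open>0 < bp * p + bn * q\<close> by (simp add: divide_simps)
qed

lemma eta_bias_step:
  assumes "0 < bp" "bp \<le> 1" "0 < bn" "bn \<le> 1" "0 \<le> nu" "nu < 1"
  defines "c \<equiv> bn / bp"
  shows "eta (bias_step bp bn nu D) x False
       = eta D x False / ((1 - c) / (1 - nu) * eta D x False + c / (1 - nu))"
proof -
  define p where "p = pmf D (x, False, True)"
  define q where "q = pmf D (x, False, False)"
  have "eta (bias_step bp bn nu D) x False
      = bp * (1 - nu) * p / (bp * (1 - nu) * p + (bp * nu * p + bn * q))"
    using assms(1-6) unfolding bias_step_eq_cond_kernel p_def q_def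
    by (simp only: eta_map_the_cond_not_None[OF bias_kernel_survives] pmf_bind_bias_kernel_pos
        pmf_bind_bias_kernel_neg less_imp_le)
  also have "\<dots> = bp * (1 - nu) * p / (bp * p + bn * q)"
    by (simp add: algebra_simps)
  also have "\<dots> = p / (p + q) / ((1 - c) / (1 - nu) * (p / (p + q)) + c / (1 - nu))"
    unfolding c_def
    by (rule reweighted_ratio_eq_linear_fractional) (use assms in \<open>simp_all add: p_def q_def\<close>)
  finally show ?thesis
    by (simp add: eta_eq_pmf p_def q_def)
qed

lemma bias_step_denominator_pos:
  fixes e c nu :: real
  assumes "0 \<le> e" "e \<le> 1" "0 < c" "nu < 1"
  shows "0 < (1 - c) / (1 - nu) * e + c / (1 - nu)"
proof -
  have "(1 - c) / (1 - nu) * e + c / (1 - nu) = ((1 - c) * e + c) / (1 - nu)"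
    by (simp add: add_divide_distrib)
  also have "(1 - c) * e + c = e + c * (1 - e)"
    by (simp add: algebra_simps)
  finally have "(1 - c) / (1 - nu) * e + c / (1 - nu) = (e + c * (1 - e)) / (1 - nu)" .
  moreover have "0 < e + c * (1 - e)"
    using assms by (cases "e = 1") (auto intro: add_nonneg_pos)
  ultimately show ?thesis
    using assms(4) by simp
qed

theorem proposition7p1:
  fixes D :: "('x \<times> bool \<times> bool) pmf" and bp bn nu :: "nat \<Rightarrow> real" and t :: nat and x :: 'x
  assumes "\<forall>i\<in>{1..t}. 0 < bp i \<and> bp i < 1 \<and> 0 < bn i \<and> bn i < 1 \<and> 0 < nu i \<and> nu i < 1"
  shows "eta (biased bp bn nu D t) x False =
    eta D x False /
      ((\<Sum>i=1..t. ((1 - bn i / bp i) / (1 - nu i)) * (\<Prod>j=i+1..t. (bn j / bp j) / (1 - nu j))) * eta D x False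
       + (\<Prod>i=1..t. (bn i / bp i) / (1 - nu i)))"
proof -
  define f where "f i = eta (biased bp bn nu D i) x False" for i
  define a where "a i = (1 - bn i / bp i) / (1 - nu i)" for i
  define b where "b i = (bn i / bp i) / (1 - nu i)" for i
  have params: "0 < bp (Suc i)" "bp (Suc i) \<le> 1" "0 < bn (Suc i)" "bn (Suc i) \<le> 1"
      "0 \<le> nu (Suc i)" "nu (Suc i) < 1" if "i < t" for i
    using assms that by (auto dest!: bspec[of _ _ "Suc i"])
  have "f (Suc i) = f i / (a (Suc i) * f i + b (Suc i))" if "i < t" for i
    using eta_bias_step[OF params[OF that]] by (simp add: f_def a_def b_def)
  moreover have "0 < a (Suc i) * f i + b (Suc i)" if "i < t" for i
    unfolding f_def a_def b_def
    by (rule bias_step_denominator_pos) (use params[OF that] in \<open>simp_all add: eta_nonneg eta_le_1\<close>)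
  ultimately show ?thesis
    using iterated_linear_fractional[of t f a b] by (simp add: f_def a_def b_def)
qed

end
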